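(* Let $S$ be an optimal $n$-town. Then the centers of all rows of $S$ of odd cardinality lie on a common vertical grid line $V_o$ (a line $x=a$ with $a\in\mathbb{Z}$), and the centers of all rows of $S$ of even cardinality lie on a common vertical line $V_e$ at distance $\frac12$ from $V_o$. Similarly, the centers of all columns of odd cardinality lie on a common horizontal grid line $H_o$, and the centers of all columns of even cardinality lie on a common horizontal line $H_e$ at distance $\frac12$ from $H_o$. Moreover, without changing its cost, $S$ can be moved by a translation and a rotation by a multiple of $90^\circ$ so that $H_o$ becomes the $x$-axis, $V_o$ becomes the $y$-axis, and $H_e$ and $V_e$ lie in the negative half-planes (i.e., $H_e$ is the line $y=-\frac12$ and $V_e$ is the line $x=-\frac12$).
   Context: An $n$-town is a set $S\subset\mathbb{Z}\times\mathbb{Z}$ of exactly $n$ distinct grid points; its cost is $c(S)=\frac12\sum_{s\in S}\sum_{t\in S}\|s-t\|_1$ (Manhattan distance), and it is optimal if its cost is minimum among all $n$-towns. For $i\in\mathbb{Z}$, the $i$-th column of $S$ is $C_i=\{(i,y)\in S: y\in\mathbb{Z}\}$ and the $i$-th row is $R_i=\{(x,i)\in S: x\in\mathbb{Z}\}$. The length of a row or column is its cardinality. The center of a nonempty row is the point midway between its leftmost and rightmost points; the center of a nonempty column is the point midway between its lowest and highest points. *)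

theory Defs
  imports Complex_Main
begin

type_synonym point = "int \<times> int"

definition l1dist :: "point \<Rightarrow> point \<Rightarrow> int" where
  "l1dist s t = \<bar>fst s - fst t\<bar> + \<bar>snd s - snd t\<bar>"

definition town :: "nat \<Rightarrow> point set \<Rightarrow> bool" where
  "town n S \<longleftrightarrow> finite S \<and> card S = n"

definition cost :: "point set \<Rightarrow> real" where
  "cost S = (1/2) * (\<Sum>s\<in>S. \<Sum>t\<in>S. real_of_int (l1dist s t))"

definition optimal :: "nat \<Rightarrow> point set \<Rightarrow> bool" where
  "optimal n S \<longleftrightarrow> town n S \<and> (\<forall>T. town n T \<longrightarrow> cost S \<le> cost T)"

definition row :: "point set \<Rightarrow> int \<Rightarrow> point set" where
  "row S i = {p \<in> S. snd p = i}"

definition col :: "point set \<Rightarrow> int \<Rightarrow> point set" where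
  "col S i = {p \<in> S. fst p = i}"

definition row_center_x :: "point set \<Rightarrow> int \<Rightarrow> real" where
  "row_center_x S i = (real_of_int (Min (fst ` row S i)) + real_of_int (Max (fst ` row S i))) / 2"

definition col_center_y :: "point set \<Rightarrow> int \<Rightarrow> real" where
  "col_center_y S i = (real_of_int (Min (snd ` col S i)) + real_of_int (Max (snd ` col S i))) / 2"

definition rot90 :: "point \<Rightarrow> point" where
  "rot90 p = (- snd p, fst p)"

end

theory Submission
  imports Defs
begin

text \<open>For finite \<open>A, B \<subseteq> \<int>\<close> the sum \<open>\<Sum>|a - b|\<close> over \<open>A \<times> B\<close> is at least its value for two
  centred intervals of the same sizes: peel off the minimum and maximum of the larger set, which
  contribute at least \<open>(|A| - 1) |B|\<close>. Equality forces the larger set to be an interval and the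
  two centres to be at most \<open>1/2\<close> apart. The cost of a town splits into these row-by-row sums
  plus a vertical part that only depends on the row lengths, so in an optimal town every pair
  of rows attains the bound. Hence twice the row centres are integers, pairwise at distance at
  most 1 and of parity opposite to the row length: odd rows are centred on a grid line \<open>x = a\<close>,
  even rows on \<open>x = a \<plusminus> 1/2\<close>. A quarter turn gives the same for columns, and a suitable
  rotation followed by a translation moves both lines of even centres to \<open>-1/2\<close>.\<close>

definition dist_sum :: "int set \<Rightarrow> int set \<Rightarrow> int" where
  "dist_sum A B = (\<Sum>a\<in>A. \<Sum>b\<in>B. \<bar>a - b\<bar>)"

definition centered_ivl :: "nat \<Rightarrow> int set" where
  "centered_ivl p = {- (int p div 2) .. int p - 1 - int p div 2}"

definition min_dist_sum :: "nat \<Rightarrow> nat \<Rightarrow> int" where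
  "min_dist_sum p q = dist_sum (centered_ivl p) (centered_ivl q)"

text \<open>\<open>Min A + Max A\<close> is twice the centre of \<open>A\<close>.\<close>
definition balanced_pair :: "int set \<Rightarrow> int set \<Rightarrow> bool" where
  "balanced_pair A B \<longleftrightarrow>
     (A \<noteq> {} \<and> B \<noteq> {} \<longrightarrow> \<bar>Min A + Max A - Min B - Max B\<bar> \<le> 1) \<and>
     (card B \<le> card A \<and> B \<noteq> {} \<longrightarrow> Max A - Min A = int (card A) - 1) \<and>
     (card A \<le> card B \<and> A \<noteq> {} \<longrightarrow> Max B - Min B = int (card B) - 1)"

definition dist_sum_bound :: "int set \<Rightarrow> int set \<Rightarrow> bool" where
  "dist_sum_bound A B \<longleftrightarrow> min_dist_sum (card A) (card B) \<le> dist_sum A B \<and>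
     (dist_sum A B = min_dist_sum (card A) (card B) \<longrightarrow> balanced_pair A B)"

lemma dist_sum_commute: "dist_sum A B = dist_sum B A"
  unfolding dist_sum_def by (subst sum.swap) (simp add: abs_minus_commute)

lemma dist_sum_insert:
  "finite A \<Longrightarrow> a \<notin> A \<Longrightarrow> dist_sum (insert a A) B = (\<Sum>b\<in>B. \<bar>a - b\<bar>) + dist_sum A B"
  unfolding dist_sum_def by simp

lemma balanced_pair_commute: "balanced_pair A B = balanced_pair B A"
  unfolding balanced_pair_def by (auto simp: abs_minus_commute)

lemma dist_sum_bound_commute: "dist_sum_bound A B = dist_sum_bound B A"
  unfolding dist_sum_bound_def min_dist_sum_def
  by (simp add: dist_sum_commute[of A] dist_sum_commute[of "centered_ivl (card A)"]
      balanced_pair_commute[of A])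

lemma card_centered_ivl [simp]: "card (centered_ivl p) = p"
  unfolding centered_ivl_def by simp

lemma centered_ivl_Suc_Suc:
  "centered_ivl (Suc (Suc p)) = {- (int p div 2) - 1, int p - int p div 2} \<union> centered_ivl p"
  unfolding centered_ivl_def by auto

lemma min_dist_sum_Suc_Suc:
  assumes "q \<le> Suc (Suc p)"
  shows "min_dist_sum (Suc (Suc p)) q = min_dist_sum p q + int q * (int p + 1)"
proof -
  let ?l = "- (int p div 2) - 1" and ?h = "int p - int p div 2"
  have "min_dist_sum (Suc (Suc p)) q = (\<Sum>b\<in>centered_ivl q. \<bar>?l - b\<bar> + \<bar>?h - b\<bar>) + min_dist_sum p q"
    unfolding min_dist_sum_def centered_ivl_Suc_Suc
    by (simp add: dist_sum_insert sum.distrib centered_ivl_def)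
  also have "(\<Sum>b\<in>centered_ivl q. \<bar>?l - b\<bar> + \<bar>?h - b\<bar>) = (\<Sum>b\<in>centered_ivl q. int p + 1)"
    using assms by (intro sum.cong) (auto simp: centered_ivl_def)
  finally show ?thesis by simp
qed

lemma Min_atLeastAtMost_int [simp]: "l \<le> u \<Longrightarrow> Min {l..u} = l" for l u :: int
  by (rule Min_eqI) auto

lemma Max_atLeastAtMost_int [simp]: "l \<le> u \<Longrightarrow> Max {l..u} = u" for l u :: int
  by (rule Max_eqI) auto

lemma card_le_Max_minus_Min:
  fixes A :: "int set"
  assumes "finite A" "A \<noteq> {}"
  shows "int (card A) - 1 \<le> Max A - Min A"
proof -
  have "card A \<le> card {Min A..Max A}"
    using assms by (intro card_mono) auto
  moreover have "Min A \<le> Max A" using assms by simp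
  ultimately show ?thesis by simp
qed

lemma eq_ivl_if_Max_minus_Min:
  fixes A :: "int set"
  assumes "finite A" "A \<noteq> {}" "Max A - Min A = int (card A) - 1"
  shows "A = {Min A..Max A}"
  using assms by (intro card_subset_eq) auto

lemma dist_sum_bound_card_le_one:
  assumes "card B \<le> card A" "card A \<le> 1" "finite A" "finite B"
  shows "dist_sum_bound A B"
proof -
  have B: "B = {} \<or> (\<exists>b. B = {b})" and A: "A = {} \<or> (\<exists>a. A = {a})"
    using assms by (auto simp: le_Suc_eq card_1_singleton_iff)
  have "centered_ivl 1 = {0}" unfolding centered_ivl_def by simp
  then show ?thesis using A B assms(1)
    by (auto simp: dist_sum_bound_def balanced_pair_def min_dist_sum_def dist_sum_def centered_ivl_def)
qed

lemma sum_abs_diff_ends_ge: "int (card B) * (M - m) \<le> (\<Sum>b\<in>B. \<bar>m - b\<bar> + \<bar>M - b\<bar>)"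
  for m M :: int
proof -
  have "(\<Sum>b\<in>B. M - m) \<le> (\<Sum>b\<in>B. \<bar>m - b\<bar> + \<bar>M - b\<bar>)"
    by (intro sum_mono) auto
  then show ?thesis by simp
qed

lemma sum_abs_diff_ends_eq:
  fixes m M :: int
  assumes "finite B" "(\<Sum>b\<in>B. \<bar>m - b\<bar> + \<bar>M - b\<bar>) = int (card B) * (M - m)"
  shows "B \<subseteq> {m..M}"
proof
  fix b assume "b \<in> B"
  have "(\<Sum>b\<in>B. \<bar>m - b\<bar> + \<bar>M - b\<bar> - (M - m)) = 0"
    using assms(2) by (simp add: sum_subtractf)
  then have "\<bar>m - b\<bar> + \<bar>M - b\<bar> - (M - m) = 0"
    using assms(1) \<open>b \<in> B\<close> by (subst (asm) sum_nonneg_eq_0_iff) auto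
  then show "b \<in> {m..M}" by auto
qed

lemma balanced_pair_ivl:
  fixes m M :: int
  assumes "m < M" "B \<subseteq> {m..M}" "B \<noteq> {}" "balanced_pair {m+1..M-1} B"
  shows "balanced_pair {m..M} B"
proof -
  have fin: "finite B" using assms(2) finite_subset by blast
  have "Min B \<in> B" "Max B \<in> B" using assms(3) fin by simp_all
  then have "Min B \<in> {m..M}" "Max B \<in> {m..M}" using assms(2) by auto
  have centres: "\<bar>m + M - Min B - Max B\<bar> \<le> 1"
  proof (cases "m + 1 \<le> M - 1")
    case True
    then show ?thesis using assms(3,4) by (simp add: balanced_pair_def)
  next
    case False
    then show ?thesis using \<open>Min B \<in> {m..M}\<close> \<open>Max B \<in> {m..M}\<close> by auto
  qed
  have "B = {m..M}" if "card {m..M} \<le> card B"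
    using card_subset_eq[OF _ assms(2)] that card_mono[OF _ assms(2)] by simp
  then show ?thesis using centres assms(1) by (auto simp: balanced_pair_def)
qed

lemma Min_less_Max_if_two_le_card:
  fixes A :: "int set"
  assumes "finite A" "2 \<le> card A"
  shows "Min A < Max A"
  using card_le_Max_minus_Min[of A] assms by fastforce

lemma card_Diff_Min_Max:
  fixes A :: "int set"
  assumes "finite A" "2 \<le> card A"
  shows "card (A - {Min A, Max A}) = card A - 2"
proof -
  have "A \<noteq> {}" using assms by auto
  then have "{Min A, Max A} \<subseteq> A" using assms(1) by simp
  then show ?thesis
    using assms Min_less_Max_if_two_le_card[OF assms] by (simp add: card_Diff_subset)
qed

lemma dist_sum_split_extremes:
  assumes "finite A" "2 \<le> card A"
  shows "dist_sum A B = dist_sum (A - {Min A, Max A}) B + (\<Sum>b\<in>B. \<bar>Min A - b\<bar> + \<bar>Max A - b\<bar>)"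
proof -
  have "A \<noteq> {}" using assms by auto
  then have "Min A \<in> A" "Max A \<in> A" using assms(1) by simp_all
  then have A_eq: "insert (Min A) (insert (Max A) (A - {Min A, Max A})) = A" by auto
  have "dist_sum (insert (Min A) (insert (Max A) (A - {Min A, Max A}))) B
      = dist_sum (A - {Min A, Max A}) B + (\<Sum>b\<in>B. \<bar>Min A - b\<bar> + \<bar>Max A - b\<bar>)"
    using assms Min_less_Max_if_two_le_card[OF assms] by (simp add: dist_sum_insert sum.distrib)
  then show ?thesis by (simp only: A_eq)
qed

lemma dist_sum_bound_peel:
  assumes A: "finite A" "2 \<le> card A" and B: "finite B" "card B \<le> card A"
    and IH: "dist_sum_bound (A - {Min A, Max A}) B"
  shows "dist_sum_bound A B"
proof -
  define m M where "m = Min A" and "M = Max A"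
  define A' where "A' = A - {m, M}"
  define E where "E = (\<Sum>b\<in>B. \<bar>m - b\<bar> + \<bar>M - b\<bar>)"
  obtain p where p: "card A = Suc (Suc p)" using A(2) by (metis add_2_eq_Suc le_Suc_ex)
  have "A \<noteq> {}" using p by auto
  have span: "int p + 1 \<le> M - m"
    using card_le_Max_minus_Min[OF A(1) \<open>A \<noteq> {}\<close>] p by (simp add: m_def M_def)
  have "card A' = p" using card_Diff_Min_Max[OF A] p by (simp add: A'_def m_def M_def)
  have split: "dist_sum A B = dist_sum A' B + E"
    using dist_sum_split_extremes[OF A] by (simp add: A'_def E_def m_def M_def)
  have rec: "min_dist_sum (card A) (card B) = min_dist_sum p (card B) + int (card B) * (int p + 1)"
    using min_dist_sum_Suc_Suc B(2) p by simp
  have E_ge: "int (card B) * (int p + 1) \<le> E"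
    using sum_abs_diff_ends_ge[of B M m] span mult_left_mono[OF span, of "int (card B)"]
    by (simp add: E_def)
  have IH': "min_dist_sum p (card B) \<le> dist_sum A' B"
    "dist_sum A' B = min_dist_sum p (card B) \<Longrightarrow> balanced_pair A' B"
    using IH \<open>card A' = p\<close> by (auto simp: dist_sum_bound_def A'_def m_def M_def)
  have "balanced_pair A B" if eq: "dist_sum A B = min_dist_sum (card A) (card B)"
  proof (cases "B = {}")
    case True
    then show ?thesis using p by (simp add: balanced_pair_def)
  next
    case False
    have "dist_sum A' B = min_dist_sum p (card B)" and E_eq: "E = int (card B) * (int p + 1)"
      using eq split rec E_ge IH'(1) by linarith+
    then have bal': "balanced_pair A' B" using IH'(2) by blast
    have "0 < card B" using False B(1) by auto
    then have "M - m = int p + 1"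
      using E_eq sum_abs_diff_ends_ge[of B M m] span by (simp add: E_def)
    then have "A = {m..M}"
      using eq_ivl_if_Max_minus_Min[OF A(1) \<open>A \<noteq> {}\<close>] p by (simp add: m_def M_def)
    moreover have "B \<subseteq> {m..M}"
      using sum_abs_diff_ends_eq[OF B(1)] E_eq \<open>M - m = int p + 1\<close> by (simp add: E_def)
    moreover have "A' = {m+1..M-1}" using \<open>A = {m..M}\<close> by (auto simp: A'_def)
    ultimately show ?thesis
      using balanced_pair_ivl[of m M B] bal' False \<open>M - m = int p + 1\<close> by simp
  qed
  then show ?thesis using split rec E_ge IH'(1) by (simp add: dist_sum_bound_def)
qed

lemma dist_sum_bound_if_finite:
  assumes "finite A" "finite B"
  shows "dist_sum_bound A B"
  using assms
proof (induction "card A + card B" arbitrary: A B rule: less_induct)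
  case less
  have le_case: "dist_sum_bound X Y"
    if "card Y \<le> card X" "finite X" "finite Y" "card X + card Y = card A + card B" for X Y
  proof (cases "card X \<le> 1")
    case True
    then show ?thesis using dist_sum_bound_card_le_one that by blast
  next
    case False
    have "dist_sum_bound (X - {Min X, Max X}) Y"
      using that False card_Diff_Min_Max[of X] by (intro less.hyps) auto
    then show ?thesis using dist_sum_bound_peel that False by auto
  qed
  show ?case
  proof (cases "card B \<le> card A")
    case True
    then show ?thesis using le_case less.prems by blast
  next
    case False
    then show ?thesis
      using le_case[of A B] less.prems by (simp add: dist_sum_bound_commute)
  qed
qed

definition total_dist :: "point set \<Rightarrow> int" where
  "total_dist S = (\<Sum>s\<in>S. \<Sum>t\<in>S. l1dist s t)"

definition compress_rows :: "point set \<Rightarrow> point set" where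
  "compress_rows S = (\<Union>i\<in>snd ` S. (\<lambda>x. (x, i)) ` centered_ivl (card (row S i)))"

lemma cost_eq_total_dist: "cost S = real_of_int (total_dist S) / 2"
  unfolding cost_def total_dist_def by (simp add: of_int_sum)

lemma finite_row [simp]: "finite S \<Longrightarrow> finite (row S i)"
  unfolding row_def by simp

lemma inj_on_fst_row: "inj_on fst (row S i)"
  unfolding row_def inj_on_def by (auto simp: prod_eq_iff)

lemma card_fst_row [simp]: "card (fst ` row S i) = card (row S i)"
  by (simp add: card_image inj_on_fst_row)

lemma row_nonempty_iff: "row S i \<noteq> {} \<longleftrightarrow> i \<in> snd ` S"
  unfolding row_def by force

lemma sum_by_rows: "finite S \<Longrightarrow> (\<Sum>s\<in>S. g s) = (\<Sum>i\<in>snd ` S. \<Sum>s\<in>row S i. g s)"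
  unfolding row_def by (rule sum.group[symmetric]) auto

lemma card_eq_sum_card_rows: "finite S \<Longrightarrow> card S = (\<Sum>i\<in>snd ` S. card (row S i))"
  using sum_by_rows[of S "\<lambda>_. 1::nat"] by simp

lemma total_dist_by_rows:
  assumes "finite S"
  shows "total_dist S = (\<Sum>i\<in>snd ` S. \<Sum>j\<in>snd ` S.
    dist_sum (fst ` row S i) (fst ` row S j) + int (card (row S i)) * int (card (row S j)) * \<bar>i - j\<bar>)"
proof -
  have rows: "(\<Sum>s\<in>row S i. \<Sum>t\<in>row S j. l1dist s t) =
    dist_sum (fst ` row S i) (fst ` row S j) + int (card (row S i)) * int (card (row S j)) * \<bar>i - j\<bar>"
    for i j
  proof -
    have "(\<Sum>s\<in>row S i. \<Sum>t\<in>row S j. l1dist s t)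
        = (\<Sum>s\<in>row S i. \<Sum>t\<in>row S j. \<bar>fst s - fst t\<bar> + \<bar>i - j\<bar>)"
      by (intro sum.cong refl) (auto simp: row_def l1dist_def)
    then show ?thesis
      by (simp add: sum.distrib dist_sum_def sum.reindex inj_on_fst_row)
  qed
  have "total_dist S = (\<Sum>s\<in>S. \<Sum>j\<in>snd ` S. \<Sum>t\<in>row S j. l1dist s t)"
    unfolding total_dist_def by (simp only: sum_by_rows[OF assms, of "l1dist _"])
  also have "\<dots> = (\<Sum>j\<in>snd ` S. \<Sum>i\<in>snd ` S. \<Sum>s\<in>row S i. \<Sum>t\<in>row S j. l1dist s t)"
    by (subst sum.swap) (simp only: sum_by_rows[OF assms])
  also have "\<dots> = (\<Sum>i\<in>snd ` S. \<Sum>j\<in>snd ` S. \<Sum>s\<in>row S i. \<Sum>t\<in>row S j. l1dist s t)"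
    by (rule sum.swap)
  finally show ?thesis by (simp only: rows)
qed

lemma finite_compress_rows: "finite S \<Longrightarrow> finite (compress_rows S)"
  by (simp add: compress_rows_def centered_ivl_def)

lemma row_compress_rows:
  "i \<in> snd ` S \<Longrightarrow> row (compress_rows S) i = (\<lambda>x. (x, i)) ` centered_ivl (card (row S i))"
  unfolding compress_rows_def row_def by auto

lemma snd_compress_rows: "finite S \<Longrightarrow> snd ` compress_rows S = snd ` S"
proof
  assume "finite S"
  show "snd ` S \<subseteq> snd ` compress_rows S"
  proof
    fix i assume i: "i \<in> snd ` S"
    then have "card (row S i) \<noteq> 0" using \<open>finite S\<close> row_nonempty_iff[of S i] by simp
    then obtain x where "x \<in> centered_ivl (card (row S i))"
      by (metis card.empty card_centered_ivl ex_in_conv)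
    then show "i \<in> snd ` compress_rows S" using i unfolding compress_rows_def by force
  qed
qed (force simp: compress_rows_def)

lemma card_row_compress_rows:
  "i \<in> snd ` S \<Longrightarrow> card (row (compress_rows S) i) = card (row S i)"
  by (simp add: row_compress_rows card_image inj_on_def)

lemma town_compress_rows:
  assumes "town n S"
  shows "town n (compress_rows S)"
proof -
  have fin: "finite S" and "card S = n" using assms by (auto simp: town_def)
  have "finite (compress_rows S)" using fin by (rule finite_compress_rows)
  moreover have "card (compress_rows S) = card S"
    unfolding card_eq_sum_card_rows[OF fin] card_eq_sum_card_rows[OF \<open>finite (compress_rows S)\<close>]
    by (simp add: snd_compress_rows[OF fin] card_row_compress_rows)
  ultimately show ?thesis using \<open>card S = n\<close> by (simp add: town_def)
qed

lemma total_dist_compress_rows: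
  assumes "finite S"
  shows "total_dist (compress_rows S) = (\<Sum>i\<in>snd ` S. \<Sum>j\<in>snd ` S.
    min_dist_sum (card (row S i)) (card (row S j)) + int (card (row S i)) * int (card (row S j)) * \<bar>i - j\<bar>)"
proof -
  have "fst ` row (compress_rows S) i = centered_ivl (card (row S i))" if "i \<in> snd ` S" for i
    using that by (simp add: row_compress_rows image_image)
  moreover have "finite (compress_rows S)" using assms by (rule finite_compress_rows)
  ultimately show ?thesis
    unfolding total_dist_by_rows[OF \<open>finite (compress_rows S)\<close>] snd_compress_rows[OF assms]
    by (intro sum.cong refl) (simp add: card_row_compress_rows min_dist_sum_def)
qed

text \<open>Compressing the rows to centred intervals keeps the vertical part of the cost and
  can only lower each horizontal term, so optimality forces equality in every one of them.\<close>
lemma rows_balanced: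
  assumes opt: "optimal n S" and "i \<in> snd ` S" "j \<in> snd ` S"
  shows "balanced_pair (fst ` row S i) (fst ` row S j)"
proof -
  have fin: "finite S" using opt by (simp add: optimal_def town_def)
  define excess where "excess i j = dist_sum (fst ` row S i) (fst ` row S j)
    - min_dist_sum (card (row S i)) (card (row S j))" for i j
  have bound: "dist_sum_bound (fst ` row S i) (fst ` row S j)" for i j
    using fin by (simp add: dist_sum_bound_if_finite)
  then have nonneg: "0 \<le> excess i j" for i j by (simp add: excess_def dist_sum_bound_def)
  have "cost S \<le> cost (compress_rows S)"
    using opt town_compress_rows by (simp add: optimal_def)
  then have "total_dist S - total_dist (compress_rows S) \<le> 0"
    by (simp add: cost_eq_total_dist)
  moreover have "total_dist S - total_dist (compress_rows S) = (\<Sum>(i, j)\<in>snd ` S \<times> snd ` S. excess i j)"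
    unfolding total_dist_by_rows[OF fin] total_dist_compress_rows[OF fin] excess_def
    by (simp add: sum_subtractf[symmetric] sum.cartesian_product split_beta)
  ultimately have "(\<Sum>(i, j)\<in>snd ` S \<times> snd ` S. excess i j) = 0"
    using sum_nonneg[of "snd ` S \<times> snd ` S" "\<lambda>(i, j). excess i j"] nonneg by fastforce
  then have "excess i j = 0"
    using fin nonneg assms(2,3) by (subst (asm) sum_nonneg_eq_0_iff) auto
  then show ?thesis using bound[of i j] by (simp add: excess_def dist_sum_bound_def)
qed

definition rows_centered :: "point set \<Rightarrow> real \<Rightarrow> real \<Rightarrow> bool" where
  "rows_centered S a e \<longleftrightarrow>
     (\<forall>i. row S i \<noteq> {} \<longrightarrow> row_center_x S i = a + (if even (card (row S i)) then e else 0))"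

definition cols_centered :: "point set \<Rightarrow> real \<Rightarrow> real \<Rightarrow> bool" where
  "cols_centered S b e \<longleftrightarrow>
     (\<forall>j. col S j \<noteq> {} \<longrightarrow> col_center_y S j = b + (if even (card (col S j)) then e else 0))"

lemma rows_centered_iff:
  "rows_centered S a e \<longleftrightarrow>
     (\<forall>i. odd (card (row S i)) \<longrightarrow> row_center_x S i = a) \<and>
     (\<forall>i. row S i \<noteq> {} \<and> even (card (row S i)) \<longrightarrow> row_center_x S i = a + e)"
  using odd_card_imp_not_empty by (fastforce simp: rows_centered_def)

lemma cols_centered_iff:
  "cols_centered S b e \<longleftrightarrow>
     (\<forall>j. odd (card (col S j)) \<longrightarrow> col_center_y S j = b) \<and>
     (\<forall>j. col S j \<noteq> {} \<and> even (card (col S j)) \<longrightarrow> col_center_y S j = b + e)"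
  using odd_card_imp_not_empty by (fastforce simp: cols_centered_def)

lemma pairwise_within_one_parity_split:
  fixes s :: "'a \<Rightarrow> int"
  assumes "finite Y" "\<And>i j. i \<in> Y \<Longrightarrow> j \<in> Y \<Longrightarrow> \<bar>s i - s j\<bar> \<le> 1"
  shows "\<exists>a. \<exists>e\<in>{-1, 1}. \<forall>i\<in>Y. s i = 2 * a + (if even (s i) then 0 else e)"
proof (cases "Y = {}")
  case False
  define c where "c = Min (s ` Y)"
  have "c \<in> s ` Y" using assms(1) False by (simp add: c_def)
  then obtain j where "j \<in> Y" "s j = c" by blast
  have range: "c \<le> s i \<and> s i \<le> c + 1" if "i \<in> Y" for i
    using assms(1) that assms(2)[OF that \<open>j \<in> Y\<close>] \<open>s j = c\<close> by (auto simp: c_def)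
  have "s i = 2 * ((c + 1) div 2) + (if even (s i) then 0 else if even c then 1 else -1)"
    if "i \<in> Y" for i
    using range[OF that] by presburger
  then show ?thesis by (intro exI[of _ "(c + 1) div 2"] bexI[of _ "if even c then 1 else -1"]) simp_all
qed auto

lemma rows_aligned:
  assumes opt: "optimal n S"
  shows "\<exists>a::int. \<exists>e\<in>{-1/2, 1/2}. rows_centered S (real_of_int a) e"
proof -
  have fin: "finite S" using opt by (simp add: optimal_def town_def)
  define s where "s i = Min (fst ` row S i) + Max (fst ` row S i)" for i
  have ne: "fst ` row S i \<noteq> {}" if "i \<in> snd ` S" for i
    using that row_nonempty_iff[of S i] by simp
  have parity: "even (s i) \<longleftrightarrow> odd (card (row S i))" if "i \<in> snd ` S" for i
  proof -
    have "s i = 2 * Min (fst ` row S i) + int (card (row S i)) - 1"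
      using rows_balanced[OF opt that that] ne[OF that] by (simp add: balanced_pair_def s_def)
    then show ?thesis by presburger
  qed
  have "\<bar>s i - s j\<bar> \<le> 1" if "i \<in> snd ` S" "j \<in> snd ` S" for i j
    using rows_balanced[OF opt that] ne[OF that(1)] ne[OF that(2)]
    unfolding balanced_pair_def s_def by (simp add: diff_diff_eq)
  with pairwise_within_one_parity_split[of "snd ` S" s] fin
  obtain a e where e: "e \<in> {-1, 1}"
    and s: "\<forall>i\<in>snd ` S. s i = 2 * a + (if even (s i) then 0 else e)"
    by blast
  have "rows_centered S (real_of_int a) (real_of_int e / 2)"
    unfolding rows_centered_def
  proof (intro allI impI)
    fix i assume "row S i \<noteq> {}"
    then have i: "i \<in> snd ` S" by (simp add: row_nonempty_iff)
    have "s i = 2 * a + (if even (card (row S i)) then e else 0)"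
      using s i parity[OF i] by auto
    moreover have "row_center_x S i = real_of_int (s i) / 2" by (simp add: row_center_x_def s_def)
    ultimately show "row_center_x S i = real_of_int a + (if even (card (row S i)) then real_of_int e / 2 else 0)"
      by (simp split: if_split_asm)
  qed
  moreover have "real_of_int e / 2 \<in> {-1/2, 1/2}" using e by auto
  ultimately show ?thesis by (intro exI[of _ a] bexI[of _ "real_of_int e / 2"])
qed

lemma cost_image:
  assumes "inj_on f S" "\<And>s t. l1dist (f s) (f t) = l1dist s t"
  shows "cost (f ` S) = cost S"
  using assms by (simp add: cost_def sum.reindex)

lemma optimal_image:
  assumes "bij f" "\<And>s t. l1dist (f s) (f t) = l1dist s t" "optimal n S"
  shows "optimal n (f ` S)"
proof -
  have inj: "inj_on f X" for X using assms(1) bij_is_inj inj_on_subset by blast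
  have cost_f: "cost (f ` X) = cost X" for X by (rule cost_image[OF inj assms(2)])
  have town_f: "town n (f ` X) \<longleftrightarrow> town n X" for X
    by (simp add: town_def card_image[OF inj] finite_image_iff[OF inj])
  have "cost (f ` S) \<le> cost T" if "town n T" for T
  proof -
    have T: "T = f ` inv f ` T" using assms(1) by (simp add: image_inv_f_f bij_is_surj image_f_inv_f)
    then have "town n (inv f ` T)" using that town_f by metis
    then have "cost S \<le> cost (inv f ` T)" using assms(3) by (simp add: optimal_def)
    then show ?thesis using T cost_f by metis
  qed
  then show ?thesis using assms(3) town_f by (simp add: optimal_def)
qed

lemma bij_rot90: "bij rot90"
  by (rule o_bij[where g = "\<lambda>p. (snd p, - fst p)"]) (auto simp: rot90_def)

lemma inj_on_rot90: "inj_on rot90 X"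
  using bij_rot90 bij_is_inj inj_on_subset by blast

lemma l1dist_rot90: "l1dist (rot90 s) (rot90 t) = l1dist s t"
  by (simp add: rot90_def l1dist_def)

lemma cost_funpow_rot90_image: "cost ((rot90 ^^ k) ` S) = cost S"
proof (induction k)
  case (Suc k)
  have "cost (rot90 ` (rot90 ^^ k) ` S) = cost ((rot90 ^^ k) ` S)"
    by (intro cost_image inj_on_rot90 l1dist_rot90)
  then show ?case using Suc by (simp add: image_comp)
qed simp

lemma row_rot90: "row (rot90 ` S) i = rot90 ` col S i"
  unfolding row_def col_def rot90_def by force

lemma col_rot90: "col (rot90 ` S) j = rot90 ` row S (- j)"
  unfolding row_def col_def rot90_def by force

lemma row_center_x_rot90:
  assumes "finite S" "col S i \<noteq> {}"
  shows "row_center_x (rot90 ` S) i = - col_center_y S i"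
proof -
  have "fst ` row (rot90 ` S) i = uminus ` snd ` col S i"
    unfolding row_rot90 by (simp add: rot90_def image_image)
  moreover have "finite (snd ` col S i)" "snd ` col S i \<noteq> {}"
    using assms by (auto simp: col_def)
  then have "Min (uminus ` snd ` col S i) = - Max (snd ` col S i)"
    "Max (uminus ` snd ` col S i) = - Min (snd ` col S i)"
    using minus_Max_eq_Min minus_Min_eq_Max by metis+
  ultimately show ?thesis by (simp add: row_center_x_def col_center_y_def field_simps)
qed

lemma col_center_y_rot90: "col_center_y (rot90 ` S) j = row_center_x S (- j)"
proof -
  have "snd ` col (rot90 ` S) j = fst ` row S (- j)"
    unfolding col_rot90 by (simp add: rot90_def image_image)
  then show ?thesis by (simp add: row_center_x_def col_center_y_def)
qed

lemma rows_centered_rot90_iff: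
  assumes "finite S"
  shows "rows_centered (rot90 ` S) a e \<longleftrightarrow> cols_centered S (- a) (- e)"
proof -
  have "card (row (rot90 ` S) i) = card (col S i)" for i
    by (simp add: row_rot90 card_image inj_on_rot90)
  then show ?thesis
    using assms by (auto simp: rows_centered_def cols_centered_def row_rot90 row_center_x_rot90)
qed

lemma cols_centered_rot90:
  assumes "rows_centered S a e"
  shows "cols_centered (rot90 ` S) a e"
proof -
  have "card (col (rot90 ` S) j) = card (row S (- j))" for j
    by (simp add: col_rot90 card_image inj_on_rot90)
  then show ?thesis
    using assms by (simp add: rows_centered_def cols_centered_def col_rot90 col_center_y_rot90)
qed

lemma cols_aligned:
  assumes "optimal n S"
  shows "\<exists>b::int. \<exists>e\<in>{-1/2, 1/2}. cols_centered S (real_of_int b) e"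
proof -
  have fin: "finite S" using assms by (simp add: optimal_def town_def)
  obtain a e where "e \<in> {-1/2, 1/2}" "rows_centered (rot90 ` S) (real_of_int a) e"
    using rows_aligned[OF optimal_image[OF bij_rot90 l1dist_rot90 assms]] by blast
  then have "cols_centered S (real_of_int (- a)) (- e)" "- e \<in> {-1/2, 1/2}"
    using rows_centered_rot90_iff[OF fin] by auto
  then show ?thesis by blast
qed

definition translate :: "int \<Rightarrow> int \<Rightarrow> point \<Rightarrow> point" where
  "translate u v p = (fst p + u, snd p + v)"

lemma l1dist_translate: "l1dist (translate u v s) (translate u v t) = l1dist s t"
  by (simp add: translate_def l1dist_def)

lemma inj_on_translate: "inj_on (translate u v) X"
  by (simp add: inj_on_def translate_def prod_eq_iff)

lemma row_translate: "row (translate u v ` S) i = translate u v ` row S (i - v)"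
  unfolding row_def translate_def by force

lemma col_translate: "col (translate u v ` S) j = translate u v ` col S (j - u)"
  unfolding col_def translate_def by force

lemma Min_image_add:
  fixes X :: "'a::linordered_ab_semigroup_add set"
  shows "finite X \<Longrightarrow> X \<noteq> {} \<Longrightarrow> Min ((\<lambda>x. x + c) ` X) = Min X + c"
  using Min_add_commute[of X "\<lambda>x. x" c] by simp

lemma Max_image_add:
  fixes X :: "'a::linordered_ab_semigroup_add set"
  shows "finite X \<Longrightarrow> X \<noteq> {} \<Longrightarrow> Max ((\<lambda>x. x + c) ` X) = Max X + c"
  using Max_add_commute[of X "\<lambda>x. x" c] by simp

lemma row_center_x_translate:
  assumes "finite S" "row S (i - v) \<noteq> {}"
  shows "row_center_x (translate u v ` S) i = row_center_x S (i - v) + u"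
proof -
  have "fst ` row (translate u v ` S) i = (\<lambda>x. x + u) ` fst ` row S (i - v)"
    unfolding row_translate by (simp add: translate_def image_image)
  moreover have "finite (fst ` row S (i - v))" "fst ` row S (i - v) \<noteq> {}" using assms by auto
  ultimately show ?thesis
    by (simp add: row_center_x_def Min_image_add Max_image_add field_simps)
qed

lemma col_center_y_translate:
  assumes "finite S" "col S (j - u) \<noteq> {}"
  shows "col_center_y (translate u v ` S) j = col_center_y S (j - u) + v"
proof -
  have "snd ` col (translate u v ` S) j = (\<lambda>y. y + v) ` snd ` col S (j - u)"
    unfolding col_translate by (simp add: translate_def image_image)
  moreover have "finite (snd ` col S (j - u))" "snd ` col S (j - u) \<noteq> {}"
    using assms by (auto simp: col_def)
  ultimately show ?thesis
    by (simp add: col_center_y_def Min_image_add Max_image_add field_simps)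
qed

lemma rows_centered_translate:
  assumes "finite S" "rows_centered S a e"
  shows "rows_centered (translate u v ` S) (a + real_of_int u) e"
  using assms
  by (simp add: rows_centered_def row_translate card_image inj_on_translate row_center_x_translate)

lemma cols_centered_translate:
  assumes "finite S" "cols_centered S b e"
  shows "cols_centered (translate u v ` S) (b + real_of_int v) e"
  using assms
  by (simp add: cols_centered_def col_translate card_image inj_on_translate col_center_y_translate)

lemma centered_rot90:
  assumes "finite S" "rows_centered S a e1" "cols_centered S b e2"
  shows "rows_centered (rot90 ` S) (- b) (- e2) \<and> cols_centered (rot90 ` S) a e1"
  using assms by (simp add: rows_centered_rot90_iff cols_centered_rot90)

lemma exists_rotation_offsets_neg_half:
  fixes a b :: int
  assumes "finite S" "rows_centered S a e1" "cols_centered S b e2"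
    and "e1 \<in> {-1/2, 1/2}" "e2 \<in> {-1/2, 1/2}"
  shows "\<exists>k a' b'. rows_centered ((rot90 ^^ k) ` S) (real_of_int a') (-1/2) \<and>
                  cols_centered ((rot90 ^^ k) ` S) (real_of_int b') (-1/2)"
proof -
  let ?R = "\<lambda>k. (rot90 ^^ k) ` S"
  have step: "rows_centered (?R (Suc k)) (- b') (- e2') \<and> cols_centered (?R (Suc k)) a' e1'"
    if "rows_centered (?R k) a' e1'" "cols_centered (?R k) b' e2'" for k a' b' e1' e2'
    using centered_rot90[OF _ that] assms(1) by (simp add: image_comp)
  have R0: "rows_centered (?R 0) a e1" "cols_centered (?R 0) b e2" using assms(2,3) by simp_all
  note R1 = step[OF R0]
  note R2 = step[OF R1[THEN conjunct1] R1[THEN conjunct2]]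
  note R3 = step[OF R2[THEN conjunct1] R2[THEN conjunct2]]
  consider "e1 = -1/2" "e2 = -1/2" | "e1 = -1/2" "e2 = 1/2" | "e1 = 1/2" "e2 = 1/2"
    | "e1 = 1/2" "e2 = -1/2"
    using assms(4,5) by auto
  then show ?thesis
  proof cases
    case 1 with R0 show ?thesis by (intro exI[of _ 0] exI[of _ a] exI[of _ b]) simp
  next
    case 2 with R1 show ?thesis by (intro exI[of _ "Suc 0"] exI[of _ "- b"] exI[of _ a]) simp
  next
    case 3 with R2 show ?thesis by (intro exI[of _ "Suc (Suc 0)"] exI[of _ "- a"] exI[of _ "- b"]) simp
  next
    case 4 with R3 show ?thesis by (intro exI[of _ "Suc (Suc (Suc 0))"] exI[of _ b] exI[of _ "- a"]) simp
  qed
qed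

lemma exists_normalizing_motion:
  assumes "optimal n S"
  obtains k u v where "cost (translate u v ` (rot90 ^^ k) ` S) = cost S"
    "rows_centered (translate u v ` (rot90 ^^ k) ` S) 0 (-1/2)"
    "cols_centered (translate u v ` (rot90 ^^ k) ` S) 0 (-1/2)"
proof -
  have fin: "finite S" using assms by (simp add: optimal_def town_def)
  obtain a e1 where e1: "e1 \<in> {-1/2, 1/2}" and rows: "rows_centered S (real_of_int a) e1"
    using rows_aligned[OF assms] by blast
  obtain b e2 where e2: "e2 \<in> {-1/2, 1/2}" and cols: "cols_centered S (real_of_int b) e2"
    using cols_aligned[OF assms] by blast
  obtain k a' b' where rows': "rows_centered ((rot90 ^^ k) ` S) (real_of_int a') (-1/2)"
    and cols': "cols_centered ((rot90 ^^ k) ` S) (real_of_int b') (-1/2)"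
    using exists_rotation_offsets_neg_half[OF fin rows cols e1 e2] by blast
  show ?thesis
  proof (rule that[where k = k and u = "- a'" and v = "- b'"])
    show "cost (translate (- a') (- b') ` (rot90 ^^ k) ` S) = cost S"
      by (simp add: cost_image inj_on_translate l1dist_translate cost_funpow_rot90_image)
    show "rows_centered (translate (- a') (- b') ` (rot90 ^^ k) ` S) 0 (-1/2)"
      using rows_centered_translate[OF _ rows', where u = "- a'" and v = "- b'"] fin by simp
    show "cols_centered (translate (- a') (- b') ` (rot90 ^^ k) ` S) 0 (-1/2)"
      using cols_centered_translate[OF _ cols', where u = "- a'" and v = "- b'"] fin by simp
  qed
qed

theorem lemma3:
  assumes "optimal n S"
  shows "(\<exists>a::int. \<exists>e::real\<in>{-1/2, 1/2}.
            (\<forall>i. odd (card (row S i)) \<longrightarrow> row_center_x S i = real_of_int a) \<and>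
            (\<forall>i. row S i \<noteq> {} \<and> even (card (row S i)) \<longrightarrow> row_center_x S i = real_of_int a + e)) \<and>
         (\<exists>b::int. \<exists>e::real\<in>{-1/2, 1/2}.
            (\<forall>j. odd (card (col S j)) \<longrightarrow> col_center_y S j = real_of_int b) \<and>
            (\<forall>j. col S j \<noteq> {} \<and> even (card (col S j)) \<longrightarrow> col_center_y S j = real_of_int b + e)) \<and>
         (\<exists>k::nat. \<exists>u v::int.
            (let S' = (\<lambda>p. (fst ((rot90 ^^ k) p) + u, snd ((rot90 ^^ k) p) + v)) ` S in
              cost S' = cost S \<and>
              (\<forall>i. odd (card (row S' i)) \<longrightarrow> row_center_x S' i = 0) \<and>
              (\<forall>i. row S' i \<noteq> {} \<and> even (card (row S' i)) \<longrightarrow> row_center_x S' i = -1/2) \<and>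
              (\<forall>j. odd (card (col S' j)) \<longrightarrow> col_center_y S' j = 0) \<and>
              (\<forall>j. col S' j \<noteq> {} \<and> even (card (col S' j)) \<longrightarrow> col_center_y S' j = -1/2)))"
proof -
  obtain k u v where "cost (translate u v ` (rot90 ^^ k) ` S) = cost S"
    "rows_centered (translate u v ` (rot90 ^^ k) ` S) 0 (-1/2)"
    "cols_centered (translate u v ` (rot90 ^^ k) ` S) 0 (-1/2)"
    using exists_normalizing_motion[OF assms] by blast
  moreover have "(\<lambda>p. (fst ((rot90 ^^ k) p) + u, snd ((rot90 ^^ k) p) + v)) ` S
      = translate u v ` (rot90 ^^ k) ` S"
    by (simp add: translate_def image_image)
  ultimately have "\<exists>k::nat. \<exists>u v::int.
      (let S' = (\<lambda>p. (fst ((rot90 ^^ k) p) + u, snd ((rot90 ^^ k) p) + v)) ` S in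
        cost S' = cost S \<and> rows_centered S' 0 (-1/2) \<and> cols_centered S' 0 (-1/2))"
    by (intro exI[of _ k] exI[of _ u] exI[of _ v]) simp
  then show ?thesis
    using rows_aligned[OF assms] cols_aligned[OF assms]
    unfolding rows_centered_iff cols_centered_iff Let_def add_0_left conj_assoc by blast
qed

end
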